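(* Let $G$ be a finite transitive permutation group on a set $\Omega$, let $\alpha\in\Omega$, and let $x\in G_\alpha$ have prime order. Then $x$ is quasi-semiregular on $\Omega$ if and only if $\mathrm{Sub}_G(x)\le G_\alpha$.
   Context: For $x\in G$, the subnormaliser is $\mathrm{Sub}_G(x)=\langle g\in G : \langle x\rangle \text{ is subnormal in } \langle x,g\rangle\rangle$. A permutation $g$ is quasi-semiregular if $\langle g\rangle$ has a unique fixed point and acts semiregularly (only the identity fixes a point) on the remaining points. *)

theory Defs
  imports "HOL-Algebra.Algebra" "HOL-Computational_Algebra.Primes"
begin

inductive subnormal :: "('g, 'b) monoid_scheme \<Rightarrow> 'g set \<Rightarrow> 'g set \<Rightarrow> bool"
  for G where
    refl: "subgroup K G \<Longrightarrow> subnormal G K K"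
  | step: "subnormal G H L \<Longrightarrow> L \<lhd> (G\<lparr>carrier := K\<rparr>) \<Longrightarrow> subgroup K G \<Longrightarrow> subnormal G H K"

definition subnormaliser :: "('g, 'b) monoid_scheme \<Rightarrow> 'g \<Rightarrow> 'g set" where
  "subnormaliser G x =
     generate G {g \<in> carrier G. subnormal G (generate G {x}) (generate G {x, g})}"

definition quasi_semiregular :: "'a set \<Rightarrow> ('a \<Rightarrow> 'a) \<Rightarrow> bool" where
  "quasi_semiregular \<Omega> g \<longleftrightarrow>
     (let C = generate (BijGroup \<Omega>) {g} in
      \<exists>\<omega>0 \<in> \<Omega>. (\<forall>\<omega>\<in>\<Omega>. (\<forall>h\<in>C. h \<omega> = \<omega>) \<longleftrightarrow> \<omega> = \<omega>0) \<and>
        (\<forall>\<omega>\<in>\<Omega> - {\<omega>0}. \<forall>h\<in>C. h \<omega> = \<omega> \<longrightarrow> h = \<one>\<^bsub>BijGroup \<Omega>\<^esub>))"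

end

theory Submission
  imports Defs
begin

text \<open>
  Every non-identity element of \<open>\<langle>x\<rangle>\<close> generates
  \<open>\<langle>x\<rangle>\<close>, so \<open>x\<close> is quasi-semiregular iff \<open>\<alpha>\<close> is its only fixed point.

  If \<open>\<alpha>\<close> is the only fixed point of \<open>x\<close>, every member \<open>K\<close> of a subnormal chain starting at
  \<open>\<langle>x\<rangle>\<close> fixes \<open>\<alpha>\<close>: if \<open>L \<lhd> K\<close> fixes \<open>\<alpha>\<close> and \<open>k \<in> K\<close>, then \<open>k\<inverse> x k \<in> L\<close>, so \<open>x\<close> fixes \<open>k \<alpha>\<close>.
  Hence \<open>Sub\<^sub>G(x) \<le> G\<^sub>\<alpha>\<close>.

  Conversely, let \<open>x\<close> also fix \<open>\<beta> \<noteq> \<alpha>\<close>. A \<open>p\<close>-subgroup of index divisible by \<open>p\<close> is normal in a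
  strictly larger \<open>p\<close>-subgroup, so a \<open>p\<close>-subgroup \<open>P\<close> of \<open>G\<^sub>\<beta>\<close> of maximal order among those in
  which \<open>\<langle>x\<rangle>\<close> is subnormal is a Sylow subgroup of \<open>G\<^sub>\<beta>\<close>. As \<open>\<langle>x\<rangle>\<close> is subnormal in
  \<open>P \<lhd> N\<^sub>G(P)\<close>, we get \<open>N\<^sub>G(P) \<le> Sub\<^sub>G(x) \<le> G\<^sub>\<alpha>\<close>. By transitivity \<open>g \<alpha> = \<beta>\<close> for some \<open>g\<close>; then
  \<open>g P g\<inverse> \<le> G\<^sub>\<beta>\<close>, and Sylow's argument gives \<open>h \<in> G\<^sub>\<beta>\<close> with \<open>h g \<in> N\<^sub>G(P) \<le> G\<^sub>\<alpha>\<close>, which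
  contradicts \<open>h g \<alpha> = \<beta>\<close>.
\<close>

(* \<open><#\<close> is also ASCII syntax for strict multiset inclusion. *)
no_notation (ASCII) subset_mset (infix \<open><#\<close> 50)

sublocale group_action \<subseteq> group G
  using group_hom group_hom.axioms(1) by blast

section \<open>Fixed points of \<open>p\<close>-group actions\<close>

lemma (in group_action) orbit_eq_singleton_iff:
  assumes "x \<in> E"
  shows "orbit G \<phi> x = {x} \<longleftrightarrow> (\<forall>g\<in>carrier G. \<phi> g x = x)"
  using one_closed unfolding orbit_def by (auto, metis)

lemma (in group_action) prime_dvd_card_orbit:
  assumes "Factorial_Ring.prime p" and "order G = p ^ k"
    and "x \<in> E" and "orbit G \<phi> x \<noteq> {x}"
  shows "p dvd card (orbit G \<phi> x)"
proof -
  have "card (orbit G \<phi> x) dvd p ^ k"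
    using orbit_stabilizer_theorem[OF \<open>x \<in> E\<close>] assms(2) by (metis dvd_triv_left)
  then obtain i where i: "card (orbit G \<phi> x) = p ^ i"
    using divides_primepow_nat[OF assms(1)] by blast
  have "i \<noteq> 0"
  proof
    assume "i = 0"
    then obtain y where "orbit G \<phi> x = {y}"
      using i card_1_singletonE by auto
    then show False
      using orbit_refl[OF \<open>x \<in> E\<close>] assms(4) by auto
  qed
  then show ?thesis
    using i by simp
qed

lemma (in group_action) card_mod_prime_eq_card_fixed:
  assumes "Factorial_Ring.prime p" and "order G = p ^ k" and "finite E"
  shows "card E mod p = card {x \<in> E. \<forall>g\<in>carrier G. \<phi> g x = x} mod p"
proof -
  define F where "F = {x \<in> E. \<forall>g\<in>carrier G. \<phi> g x = x}"
  have F_iff: "x \<in> F \<longleftrightarrow> orbit G \<phi> x = {x}" if "x \<in> E" for x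
    using orbit_eq_singleton_iff[OF that] that unfolding F_def by blast
  have "p dvd (\<Sum>x\<in>orb. of_bool (x \<notin> F))" if orb: "orb \<in> orbits G E \<phi>" for orb
  proof -
    obtain x where x: "x \<in> E" "orb = orbit G \<phi> x"
      using orb unfolding orbits_def by blast
    have orb_E: "orb \<subseteq> E"
      using x element_image unfolding orbit_def by blast
    show ?thesis
    proof (cases "x \<in> F")
      case True
      then show ?thesis using x F_iff by simp
    next
      case False
      have "y \<notin> F" if "y \<in> orb" for y
      proof
        assume "y \<in> F"
        then have "orbit G \<phi> y = {y}" using F_iff orb_E that by blast
        moreover have "x \<in> orbit G \<phi> y"
          using orbit_sym x orb_E that by blast
        ultimately show False
          using False \<open>y \<in> F\<close> by simp
      qed
      then have "(\<Sum>x\<in>orb. of_bool (x \<notin> F)) = card orb"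
        by simp
      then show ?thesis
        using prime_dvd_card_orbit[OF assms(1,2) x(1)] False F_iff x by simp
    qed
  qed
  then have "p dvd (\<Sum>x\<in>E. of_bool (x \<notin> F))"
    using disjoint_sum[OF assms(3)] dvd_sum by metis
  moreover have "(\<Sum>x\<in>E. of_bool (x \<notin> F) :: nat) = card (E - F)"
    using assms(3) by (simp add: Diff_eq Compl_eq)
  moreover have "card (E - F) = card E - card F"
    using assms(3) by (simp add: F_def card_Diff_subset)
  moreover have "card F \<le> card E"
    using assms(3) by (simp add: F_def card_mono)
  ultimately show ?thesis
    unfolding F_def[symmetric] by (metis le_add_diff_inverse mod_mult_self2 dvdE)
qed

section \<open>Conjugates, cosets and normalizers\<close>

context group
begin

lemma conj_coset_eq_image: "g <# H #> inv g = (\<lambda>h. g \<otimes> h \<otimes> inv g) ` H"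
  unfolding l_coset_def r_coset_def by blast

lemma card_conj_coset:
  assumes "g \<in> carrier G" and "H \<subseteq> carrier G"
  shows "card (g <# H #> inv g) = card H"
proof -
  have "inj_on (\<lambda>h. g \<otimes> h \<otimes> inv g) H"
    using assms conjugation_is_inj by (intro inj_onI) blast
  then show ?thesis
    using conj_coset_eq_image card_image by simp
qed

lemma subgroup_conj_coset:
  assumes "subgroup H G" and "g \<in> carrier G"
  shows "subgroup (g <# H #> inv g) G"
  using subgroup_conjugation_is_surj1[of "inv g" H] assms by simp

lemma conj_coset_mult:
  assumes "g \<in> carrier G" and "h \<in> carrier G" and "H \<subseteq> carrier G"
  shows "h <# (g <# H #> inv g) #> inv h = (h \<otimes> g) <# H #> inv (h \<otimes> g)"
  using assms
  by (simp add: coset_assoc lcos_m_assoc coset_mult_assoc l_coset_subset_G inv_mult_group)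

lemma conj_coset_inv_cancel:
  assumes "g \<in> carrier G" and "H \<subseteq> carrier G"
  shows "inv g <# (g <# H #> inv g) #> g = H"
  using subgroup_conjugation_is_surj0[of "inv g" H] assms by simp

lemma conj_coset_mono:
  assumes "H \<subseteq> K"
  shows "g <# H #> h \<subseteq> g <# K #> h"
  using assms unfolding l_coset_def r_coset_def by blast

lemma normalizer_iff:
  assumes "H \<subseteq> carrier G"
  shows "g \<in> normalizer G H \<longleftrightarrow> g \<in> carrier G \<and> g <# H #> inv g = H"
  using assms unfolding normalizer_def stabilizer_def by auto

lemma normalizer_iff_conj_coset_subset:
  assumes "H \<subseteq> carrier G" and "finite H" and "g \<in> carrier G"
  shows "g \<in> normalizer G H \<longleftrightarrow> g <# H #> inv g \<subseteq> H"
  using normalizer_iff[OF assms(1)] card_subset_eq[OF assms(2)] card_conj_coset[OF assms(3,1)]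
    assms(3) by auto

lemma rcos_eq_iff:
  assumes "subgroup H G" and "a \<in> carrier G" and "b \<in> carrier G"
  shows "H #> a = H #> b \<longleftrightarrow> a \<otimes> inv b \<in> H"
proof
  assume "H #> a = H #> b"
  then have "a \<in> H #> b"
    using rcos_self[OF assms(2,1)] by simp
  then show "a \<otimes> inv b \<in> H"
    using subgroup.rcos_module_imp[OF assms(1) is_group assms(3)] by blast
next
  assume "a \<otimes> inv b \<in> H"
  then have "a \<in> H #> b"
    using subgroup.rcos_module_rev[OF assms(1) is_group assms(3,2)] by blast
  then show "H #> a = H #> b"
    using repr_independence[OF _ assms(3,1)] by simp
qed

lemma rcos_in_rcosets:
  assumes "H \<subseteq> carrier G" and "C \<in> rcosets H" and "a \<in> carrier G"
  shows "C #> a \<in> rcosets H"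
proof -
  obtain g where "g \<in> carrier G" "C = H #> g"
    using assms(2) unfolding RCOSETS_def by blast
  then show ?thesis
    using rcosetsI[OF assms(1)] coset_mult_assoc[OF assms(1)] assms(3) by simp
qed

lemma group_action_rcosets:
  assumes "subgroup H G"
  shows "group_action G (rcosets H) (\<lambda>g. \<lambda>C\<in>rcosets H. C #> inv g)"
proof -
  have H: "H \<subseteq> carrier G"
    using subgroup.subset[OF assms] .
  have C_carrier: "C \<subseteq> carrier G" if "C \<in> rcosets H" for C
    using subgroup.rcosets_carrier[OF assms is_group that] .
  have "(\<lambda>C\<in>rcosets H. C #> inv g) \<in> Bij (rcosets H)" if g: "g \<in> carrier G" for g
  proof -
    have "bij_betw (\<lambda>C\<in>rcosets H. C #> inv g) (rcosets H) (rcosets H)"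
      by (rule bij_betwI[where g = "\<lambda>C\<in>rcosets H. C #> g"])
        (use g rcos_in_rcosets[OF H] C_carrier in \<open>auto simp: coset_mult_assoc\<close>)
    then show ?thesis
      unfolding Bij_def by simp
  qed
  moreover have "(\<lambda>C\<in>rcosets H. C #> inv (g \<otimes> h)) =
      compose (rcosets H) (\<lambda>C\<in>rcosets H. C #> inv g) (\<lambda>C\<in>rcosets H. C #> inv h)"
    if "g \<in> carrier G" and "h \<in> carrier G" for g h
    unfolding compose_def using that rcos_in_rcosets[OF H] C_carrier
    by (intro restrict_ext) (auto simp: coset_mult_assoc inv_mult_group)
  ultimately have "(\<lambda>g. \<lambda>C\<in>rcosets H. C #> inv g) \<in> hom G (BijGroup (rcosets H))"
    by (intro homI) (auto simp: BijGroup_def)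
  then show ?thesis
    unfolding group_action_def group_hom_def group_hom_axioms_def
    using is_group group_BijGroup by blast
qed

lemma rcos_fixed_iff_conj_coset_subset:
  assumes "subgroup S G" and "subgroup Q G" and "g \<in> carrier G"
  shows "(\<forall>q\<in>Q. S #> g #> inv q = S #> g) \<longleftrightarrow> g <# Q #> inv g \<subseteq> S"
proof -
  have Q: "Q \<subseteq> carrier G"
    using subgroup.subset[OF assms(2)] .
  have "S #> g #> inv q = S #> g \<longleftrightarrow> g \<otimes> inv q \<otimes> inv g \<in> S" if "q \<in> Q" for q
  proof -
    have "inv q \<in> carrier G"
      using that Q by auto
    then have "S #> g #> inv q = S #> (g \<otimes> inv q)"
      using coset_mult_assoc[OF subgroup.subset[OF assms(1)] assms(3)] by simp
    then show ?thesis
      using rcos_eq_iff[OF assms(1)] assms(3) \<open>inv q \<in> carrier G\<close> by simp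
  qed
  then have "(\<forall>q\<in>Q. S #> g #> inv q = S #> g) \<longleftrightarrow> (\<forall>q\<in>Q. g \<otimes> inv q \<otimes> inv g \<in> S)"
    by blast
  also have "\<dots> \<longleftrightarrow> (\<forall>q\<in>Q. g \<otimes> q \<otimes> inv g \<in> S)"
    using subgroup.m_inv_closed[OF assms(2)] Q by (metis inv_inv subsetD)
  also have "\<dots> \<longleftrightarrow> g <# Q #> inv g \<subseteq> S"
    unfolding conj_coset_eq_image by blast
  finally show ?thesis .
qed

lemma card_rcosets_mod_prime_eq_fixed:
  assumes "subgroup Q G" and "subgroup H G" and "finite (carrier G)"
    and "Factorial_Ring.prime p" and "card Q = p ^ k"
  shows "card (rcosets H) mod p = card {C \<in> rcosets H. \<forall>q\<in>Q. C #> inv q = C} mod p"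
proof -
  interpret Q: group_action "G\<lparr>carrier := Q\<rparr>" "rcosets H" "\<lambda>g. \<lambda>C\<in>rcosets H. C #> inv g"
    using group_action.induced_action[OF group_action_rcosets[OF assms(2)] assms(1)] .
  have "finite (rcosets H)"
    using assms(3) rcosets_subset_PowG[OF assms(2)] finite_subset by blast
  then have "card (rcosets H) mod p =
      card {C \<in> rcosets H. \<forall>q\<in>Q. (\<lambda>C\<in>rcosets H. C #> inv q) C = C} mod p"
    using Q.card_mod_prime_eq_card_fixed[OF assms(4)] assms(5) by (simp add: order_def)
  also have "{C \<in> rcosets H. \<forall>q\<in>Q. (\<lambda>C\<in>rcosets H. C #> inv q) C = C} =
      {C \<in> rcosets H. \<forall>q\<in>Q. C #> inv q = C}"
    by auto
  finally show ?thesis .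
qed

lemma p_subgroup_conj_coset_subset:
  assumes "subgroup Q G" and "subgroup S G" and "finite (carrier G)"
    and "Factorial_Ring.prime p" and "card Q = p ^ k" and "\<not> p dvd card (rcosets S)"
  shows "\<exists>g\<in>carrier G. g <# Q #> inv g \<subseteq> S"
proof -
  have "card {C \<in> rcosets S. \<forall>q\<in>Q. C #> inv q = C} \<noteq> 0"
    using card_rcosets_mod_prime_eq_fixed[OF assms(1-5)] assms(6)
    by (metis dvd_eq_mod_eq_0 mod_0)
  then have "{C \<in> rcosets S. \<forall>q\<in>Q. C #> inv q = C} \<noteq> {}"
    by (metis card.empty)
  then obtain C where "C \<in> rcosets S" and "\<forall>q\<in>Q. C #> inv q = C"
    by blast
  then obtain g where "g \<in> carrier G" and "\<forall>q\<in>Q. S #> g #> inv q = S #> g"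
    unfolding RCOSETS_def by blast
  then show ?thesis
    using rcos_fixed_iff_conj_coset_subset[OF assms(2,1)] by blast
qed

text \<open>The cosets fixed by \<open>Q\<close> acting on its own cosets are exactly those of the normalizer.\<close>
lemma card_rcosets_mod_prime_eq_normalizer:
  assumes "subgroup Q G" and "finite (carrier G)"
    and "Factorial_Ring.prime p" and "card Q = p ^ k"
  shows "card (rcosets Q) mod p = card (rcosets\<^bsub>G\<lparr>carrier := normalizer G Q\<rparr>\<^esub> Q) mod p"
proof -
  have Q: "Q \<subseteq> carrier G" and "finite Q"
    using subgroup.subset[OF assms(1)] assms(2) finite_subset by auto
  have "(\<forall>q\<in>Q. Q #> g #> inv q = Q #> g) \<longleftrightarrow> g \<in> normalizer G Q" if "g \<in> carrier G" for g
    using rcos_fixed_iff_conj_coset_subset[OF assms(1,1) that]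
      normalizer_iff_conj_coset_subset[OF Q \<open>finite Q\<close> that] by simp
  then have "{C \<in> rcosets Q. \<forall>q\<in>Q. C #> inv q = C} = (\<lambda>g. Q #> g) ` normalizer G Q"
    using normalizer_iff[OF Q] unfolding RCOSETS_def by auto
  also have "\<dots> = rcosets\<^bsub>G\<lparr>carrier := normalizer G Q\<rparr>\<^esub> Q"
    unfolding RCOSETS_def by auto
  finally show ?thesis
    using card_rcosets_mod_prime_eq_fixed[OF assms(1,1,2-4)] by simp
qed

end

section \<open>\<open>p\<close>-subgroups\<close>

lemma prime_power_dvd_decompose:
  fixes p n :: nat
  assumes "Factorial_Ring.prime p" and "n \<noteq> 0" and "p ^ Suc k dvd n"
  obtains a m where "n = p ^ a * m" and "\<not> p dvd m" and "k < a"
proof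
  have "\<not> is_unit p"
    using assms(1) by (metis not_prime_unit)
  show "n = p ^ multiplicity p n * (n div p ^ multiplicity p n)"
    using multiplicity_dvd[of p n] by simp
  show "\<not> p dvd n div p ^ multiplicity p n"
    using multiplicity_decompose[OF assms(2) \<open>\<not> is_unit p\<close>] .
  show "k < multiplicity p n"
    using multiplicity_geI[OF assms(2) \<open>\<not> is_unit p\<close> assms(3)] by simp
qed

context group
begin

lemma exists_sylow_subgroup:
  assumes "finite (carrier G)" and p: "Factorial_Ring.prime p" and "p ^ Suc k dvd order G"
  obtains S a where "subgroup S G" and "card S = p ^ a" and "k < a" and "\<not> p dvd card (rcosets S)"
proof -
  have "order G \<noteq> 0"
    using assms(1) order_gt_0_iff_finite by simp
  then obtain a m where order: "order G = p ^ a * m" and "\<not> p dvd m" and "k < a"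
    using prime_power_dvd_decompose[OF p _ assms(3)] by metis
  obtain S where S: "subgroup S G" and card_S: "card S = p ^ a"
    using sylow_thm[OF p is_group order assms(1)] by blast
  have "card (rcosets S) * p ^ a = p ^ a * m"
    using lagrange[OF S] card_S order by simp
  then have "card (rcosets S) = m"
    using p by (simp add: prime_gt_0_nat)
  then show ?thesis
    using that S card_S \<open>k < a\<close> \<open>\<not> p dvd m\<close> by blast
qed

lemma prime_power_dvd_card_normalizer:
  assumes "subgroup Q G" and "finite (carrier G)"
    and "Factorial_Ring.prime p" and "card Q = p ^ k" and "p dvd card (rcosets Q)"
  shows "p ^ Suc k dvd card (normalizer G Q)"
proof -
  interpret N: group "G\<lparr>carrier := normalizer G Q\<rparr>"
    using subgroup_imp_group[OF normalizer_imp_subgroup[OF subgroup.subset[OF assms(1)]]] .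
  have "p dvd card (rcosets\<^bsub>G\<lparr>carrier := normalizer G Q\<rparr>\<^esub> Q)"
    using card_rcosets_mod_prime_eq_normalizer[OF assms(1-4)] assms(5) by (simp add: dvd_eq_mod_eq_0)
  then obtain c where "card (rcosets\<^bsub>G\<lparr>carrier := normalizer G Q\<rparr>\<^esub> Q) = p * c" ..
  then have "card (normalizer G Q) = p ^ Suc k * c"
    using N.lagrange[OF normal_imp_subgroup[OF subgroup_in_normalizer[OF assms(1)]]] assms(4)
    by (simp add: order_def ac_simps)
  then show ?thesis
    by simp
qed

text \<open>\<open>R\<close> is a conjugate, inside the normalizer of \<open>Q\<close>, of a Sylow subgroup of that normalizer.\<close>
lemma p_subgroup_normalizer_growth:
  assumes "subgroup Q G" and "finite (carrier G)"
    and p: "Factorial_Ring.prime p" and "card Q = p ^ k" and "p dvd card (rcosets Q)"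
  shows "\<exists>R. subgroup R G \<and> Q \<subset> R \<and> Q \<lhd> G\<lparr>carrier := R\<rparr> \<and> (\<exists>a. card R = p ^ a)"
proof -
  define N where "N = normalizer G Q"
  have N: "subgroup N G"
    unfolding N_def using normalizer_imp_subgroup[OF subgroup.subset[OF assms(1)]] .
  interpret N: group "G\<lparr>carrier := N\<rparr>"
    using subgroup_imp_group[OF N] .
  have Q_normal: "Q \<lhd> G\<lparr>carrier := N\<rparr>"
    unfolding N_def using subgroup_in_normalizer[OF assms(1)] .
  then have Q_N: "subgroup Q (G\<lparr>carrier := N\<rparr>)"
    by (rule normal_imp_subgroup)
  have fin_N: "finite (carrier (G\<lparr>carrier := N\<rparr>))"
    using assms(2) subgroup.subset[OF N] finite_subset by auto
  have "p ^ Suc k dvd order (G\<lparr>carrier := N\<rparr>)"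
    using prime_power_dvd_card_normalizer[OF assms] unfolding N_def by (simp add: order_def)
  then obtain S a where S: "subgroup S (G\<lparr>carrier := N\<rparr>)" and card_S: "card S = p ^ a"
    and "k < a" and "\<not> p dvd card (rcosets\<^bsub>G\<lparr>carrier := N\<rparr>\<^esub> S)"
    by (rule N.exists_sylow_subgroup[OF fin_N p])
  then obtain n where n: "n \<in> N" and "n <# Q #> inv\<^bsub>G\<lparr>carrier := N\<rparr>\<^esub> n \<subseteq> S"
    using N.p_subgroup_conj_coset_subset[OF Q_N S fin_N p assms(4)] by auto
  then have nQ: "n <# Q #> inv n \<subseteq> S"
    using m_inv_consistent[OF N n] by simp
  have "n \<in> carrier G"
    using n subgroup.subset[OF N] by blast
  define R where "R = inv n <# S #> n"
  have R_N: "subgroup R (G\<lparr>carrier := N\<rparr>)"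
    using N.subgroup_conjugation_is_surj1[of n, OF _ S] n m_inv_consistent[OF N n]
    unfolding R_def by simp
  have "Q \<subseteq> R"
    using conj_coset_mono[OF nQ, of "inv n" n] conj_coset_inv_cancel[OF \<open>n \<in> carrier G\<close>]
      subgroup.subset[OF assms(1)] unfolding R_def by simp
  moreover have "card R = p ^ a"
    using card_conj_coset[of "inv n" S] \<open>n \<in> carrier G\<close> subgroup.subset[OF incl_subgroup[OF N S]]
      card_S unfolding R_def by simp
  moreover have "card Q < card R"
    using \<open>k < a\<close> assms(4) \<open>card R = p ^ a\<close> prime_gt_1_nat[OF p] by (simp add: power_strict_increasing)
  moreover have "Q \<lhd> G\<lparr>carrier := R\<rparr>"
    using N.normal_restrict_supergroup[OF R_N Q_normal \<open>Q \<subseteq> R\<close>] by simp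
  ultimately show ?thesis
    using incl_subgroup[OF N R_N] by (intro exI[of _ R]) auto
qed

lemma exists_mult_in_normalizer_if_sylow_conj_subset:
  assumes "finite (carrier G)" and H: "subgroup H G" and P: "subgroup P G" and "P \<subseteq> H"
    and p: "Factorial_Ring.prime p" and "card P = p ^ k"
    and "\<not> p dvd card (rcosets\<^bsub>G\<lparr>carrier := H\<rparr>\<^esub> P)"
    and g: "g \<in> carrier G" and "g <# P #> inv g \<subseteq> H"
  shows "\<exists>h\<in>H. h \<otimes> g \<in> normalizer G P"
proof -
  interpret H: group "G\<lparr>carrier := H\<rparr>"
    using subgroup_imp_group[OF H] .
  have P_carrier: "P \<subseteq> carrier G" and "finite P"
    using subgroup.subset[OF P] assms(1) finite_subset by auto
  have fin_H: "finite (carrier (G\<lparr>carrier := H\<rparr>))"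
    using finite_subset[OF subgroup.subset[OF H] assms(1)] by simp
  have "subgroup (g <# P #> inv g) (G\<lparr>carrier := H\<rparr>)"
    using subgroup_incl[OF subgroup_conj_coset[OF P g] H assms(9)] .
  moreover have "card (g <# P #> inv g) = p ^ k"
    using card_conj_coset[OF g P_carrier] assms(6) by simp
  ultimately obtain h where h: "h \<in> H" and "h <# (g <# P #> inv g) #> inv h \<subseteq> P"
    using H.p_subgroup_conj_coset_subset[OF _ subgroup_incl[OF P H \<open>P \<subseteq> H\<close>] fin_H p _ assms(7)]
      m_inv_consistent[OF H] by fastforce
  moreover have "h \<in> carrier G"
    using h subgroup.subset[OF H] by blast
  ultimately have "h \<otimes> g \<in> normalizer G P"
    using normalizer_iff_conj_coset_subset[OF P_carrier \<open>finite P\<close>] conj_coset_mult[OF g _ P_carrier] g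
    by simp
  then show ?thesis
    using h by blast
qed

lemma generate_eq_if_prime_ord:
  assumes "x \<in> carrier G" and p: "Factorial_Ring.prime (ord x)"
    and "h \<in> generate G {x}" and "h \<noteq> \<one>"
  shows "generate G {h} = generate G {x}"
proof -
  define K where "K = generate G {x}"
  define L where "L = generate G {h}"
  have K: "subgroup K G"
    unfolding K_def using generate_is_subgroup assms(1) by simp
  interpret K: group "G\<lparr>carrier := K\<rparr>"
    using subgroup_imp_group[OF K] .
  have card_K: "card K = ord x"
    unfolding K_def using generate_pow_card[OF assms(1)] by simp
  then have "finite K"
    using card_ge_0_finite[of K] prime_gt_0_nat[OF p] by simp
  have "h \<in> carrier G"
    using assms(3) subgroup.subset[OF K] unfolding K_def by blast
  have L: "subgroup L G"
    unfolding L_def using generate_is_subgroup \<open>h \<in> carrier G\<close> by simp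
  have "L \<subseteq> K"
    unfolding L_def K_def using generate_subgroup_incl[OF _ K] assms(3) K_def by simp
  have "card (rcosets\<^bsub>G\<lparr>carrier := K\<rparr>\<^esub> L) * card L = card K"
    using K.lagrange[OF subgroup_incl[OF L K \<open>L \<subseteq> K\<close>]] by (simp add: order_def)
  then have "card L dvd ord x"
    using card_K by (metis dvdI mult.commute)
  moreover have "card L \<noteq> 1"
  proof
    assume "card L = 1"
    then obtain y where "L = {y}"
      by (rule card_1_singletonE)
    moreover have "\<one> \<in> L" and "h \<in> L"
      unfolding L_def by (auto intro: generate.one generate.incl)
    ultimately show False
      using assms(4) by simp
  qed
  ultimately have "card L = card K"
    using p card_K prime_nat_iff by auto
  then show ?thesis
    using card_subset_eq[OF \<open>finite K\<close> \<open>L \<subseteq> K\<close>] unfolding K_def L_def by simp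
qed

end

section \<open>Subnormal subgroups\<close>

context group
begin

lemma subnormal_subgroups:
  assumes "subnormal G H K"
  shows "subgroup H G" and "subgroup K G" and "H \<subseteq> K"
proof -
  have "subgroup H G \<and> subgroup K G \<and> H \<subseteq> K"
    using assms
  proof (induction rule: subnormal.induct)
    case (step H L K)
    then have "L \<subseteq> K"
      using normal_imp_subgroup[OF step(2)] subgroup.subset by fastforce
    then show ?case
      using step by auto
  qed simp
  then show "subgroup H G" and "subgroup K G" and "H \<subseteq> K"
    by auto
qed

lemma subnormal_intermediate:
  assumes "subnormal G H K" and "subgroup M G" and "H \<subseteq> M" and "M \<subseteq> K"
  shows "subnormal G H M"
  using assms
proof (induction arbitrary: M rule: subnormal.induct)
  case (refl K)
  then show ?case
    using subnormal.refl by auto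
next
  case (step H L K)
  have "subgroup L G" and "H \<subseteq> L"
    using subnormal_subgroups[OF step(1)] by auto
  then have "subnormal G H (L \<inter> M)"
    using step.IH[OF subgroups_Inter_pair[OF \<open>subgroup L G\<close> step.prems(1)]] step.prems(2)
    by blast
  moreover have "L \<inter> M \<lhd> G\<lparr>carrier := M\<rparr>"
    using normal_inter[OF step(3) step.prems(1) step(2)] step.prems(3) by (simp add: Int_absorb1)
  ultimately show ?case
    by (rule subnormal.step[OF _ _ step.prems(1)])
qed

text \<open>The chain \<open>\<langle>x\<rangle> \<dots> P \<lhd> N(P)\<close> is cut down to \<open>\<langle>x, n\<rangle>\<close>.\<close>
lemma normalizer_subset_subnormaliser:
  assumes "subnormal G (generate G {x}) P"
  shows "normalizer G P \<subseteq> subnormaliser G x"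
proof
  fix n
  assume n: "n \<in> normalizer G P"
  have P: "subgroup P G" and x_P: "generate G {x} \<subseteq> P"
    using subnormal_subgroups[OF assms] by auto
  have N: "subgroup (normalizer G P) G"
    using normalizer_imp_subgroup[OF subgroup.subset[OF P]] .
  have "P \<subseteq> normalizer G P"
    using subgroup.subset[OF normal_imp_subgroup[OF subgroup_in_normalizer[OF P]]] by simp
  moreover have "x \<in> generate G {x}"
    by (rule generate.incl) simp
  ultimately have xn: "{x, n} \<subseteq> normalizer G P"
    using x_P n by blast
  then have "{x, n} \<subseteq> carrier G"
    using subgroup.subset[OF N] by blast
  have "subnormal G (generate G {x}) (normalizer G P)"
    using subnormal.step[OF assms subgroup_in_normalizer[OF P] N] .
  moreover have "subgroup (generate G {x, n}) G"
    using generate_is_subgroup[OF \<open>{x, n} \<subseteq> carrier G\<close>] .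
  moreover have "generate G {x} \<subseteq> generate G {x, n}"
    using mono_generate by simp
  moreover have "generate G {x, n} \<subseteq> normalizer G P"
    using generate_subgroup_incl[OF xn N] .
  ultimately have "subnormal G (generate G {x}) (generate G {x, n})"
    by (rule subnormal_intermediate)
  then show "n \<in> subnormaliser G x"
    using \<open>{x, n} \<subseteq> carrier G\<close> unfolding subnormaliser_def by (intro generate.incl) simp
qed

lemma subnormal_p_subgroup_growth:
  assumes "finite (carrier G)" and H: "subgroup H G" and P: "subgroup P G" and "P \<subseteq> H"
    and p: "Factorial_Ring.prime p" and "card P = p ^ k" and "subnormal G K P"
    and "p dvd card (rcosets\<^bsub>G\<lparr>carrier := H\<rparr>\<^esub> P)"
  shows "\<exists>R. subgroup R G \<and> R \<subseteq> H \<and> P \<subset> R \<and> (\<exists>a. card R = p ^ a) \<and> subnormal G K R"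
proof -
  interpret H: group "G\<lparr>carrier := H\<rparr>"
    using subgroup_imp_group[OF H] .
  have "finite (carrier (G\<lparr>carrier := H\<rparr>))"
    using finite_subset[OF subgroup.subset[OF H] assms(1)] by simp
  then obtain R a where R: "subgroup R (G\<lparr>carrier := H\<rparr>)" and "P \<subset> R"
    and "P \<lhd> G\<lparr>carrier := R\<rparr>" and "card R = p ^ a"
    using H.p_subgroup_normalizer_growth[OF subgroup_incl[OF P H \<open>P \<subseteq> H\<close>] _ p assms(6,8)]
    by auto
  moreover have "subgroup R G"
    using incl_subgroup[OF H R] .
  moreover have "subnormal G K R"
    using subnormal.step[OF assms(7) \<open>P \<lhd> G\<lparr>carrier := R\<rparr>\<close> \<open>subgroup R G\<close>] .
  ultimately show ?thesis
    using subgroup.subset[OF R] by auto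
qed

text \<open>The condition \<open>\<not> ord x dvd card (rcosets P)\<close> says that \<open>P\<close> is a Sylow subgroup of \<open>H\<close>.\<close>
lemma exists_sylow_subnormal:
  assumes "finite (carrier G)" and H: "subgroup H G" and "x \<in> H" and p: "Factorial_Ring.prime (ord x)"
  shows "\<exists>P k. subgroup P G \<and> P \<subseteq> H \<and> card P = ord x ^ k \<and>
    subnormal G (generate G {x}) P \<and> \<not> ord x dvd card (rcosets\<^bsub>G\<lparr>carrier := H\<rparr>\<^esub> P)"
proof -
  define is_cand where "is_cand P \<longleftrightarrow> subgroup P G \<and> P \<subseteq> H \<and> (\<exists>k. card P = ord x ^ k) \<and>
    subnormal G (generate G {x}) P" for P
  have x: "x \<in> carrier G"
    using H \<open>x \<in> H\<close> subgroup.subset by blast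
  have "subgroup (generate G {x}) G"
    using generate_is_subgroup x by simp
  moreover have "generate G {x} \<subseteq> H"
    using generate_subgroup_incl H \<open>x \<in> H\<close> by simp
  moreover have "card (generate G {x}) = ord x ^ 1"
    using generate_pow_card[OF x] by simp
  ultimately have "is_cand (generate G {x})"
    unfolding is_cand_def using subnormal.refl by blast
  moreover have "\<forall>P. is_cand P \<longrightarrow> card P < Suc (card (carrier G))"
    unfolding is_cand_def using card_mono[OF assms(1)] subgroup.subset le_imp_less_Suc by blast
  ultimately have "\<exists>P. is_cand P \<and> (\<forall>R. is_cand R \<longrightarrow> card R \<le> card P)"
    by (rule ex_has_greatest_nat)
  then obtain P k where "is_cand P" and P_max: "\<And>R. is_cand R \<Longrightarrow> card R \<le> card P"
    and P: "subgroup P G" and "P \<subseteq> H" and card_P: "card P = ord x ^ k"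
    and P_sn: "subnormal G (generate G {x}) P"
    unfolding is_cand_def by blast
  have "\<not> ord x dvd card (rcosets\<^bsub>G\<lparr>carrier := H\<rparr>\<^esub> P)"
  proof
    assume "ord x dvd card (rcosets\<^bsub>G\<lparr>carrier := H\<rparr>\<^esub> P)"
    then obtain R where "is_cand R" and "P \<subset> R"
      using subnormal_p_subgroup_growth[OF assms(1) H P \<open>P \<subseteq> H\<close> p card_P P_sn]
      unfolding is_cand_def by blast
    moreover have "finite R"
      using \<open>is_cand R\<close> finite_subset[OF _ assms(1)] subgroup.subset unfolding is_cand_def by blast
    ultimately show False
      using P_max[of R] psubset_card_mono[of R P] by simp
  qed
  then show ?thesis
    using P \<open>P \<subseteq> H\<close> card_P P_sn by blast
qed

end

section \<open>The subnormaliser and point stabilizers\<close>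

context group_action
begin

lemma conj_coset_stabilizer:
  assumes "g \<in> carrier G" and "\<alpha> \<in> E" and "K \<subseteq> stabilizer G \<phi> \<alpha>"
  shows "g <# K #> inv g \<subseteq> stabilizer G \<phi> (\<phi> g \<alpha>)"
proof
  fix r
  assume "r \<in> g <# K #> inv g"
  moreover have K: "K \<subseteq> carrier G"
    using assms(3) stabilizer_subset by blast
  ultimately obtain k where k: "k \<in> K" and r: "r = g \<otimes> k \<otimes> inv g"
    using conj_coset_eq_image by blast
  have "\<phi> (inv g) (\<phi> g \<alpha>) = \<alpha>"
    using orbit_sym_aux[OF assms(1,2)] by simp
  moreover have "\<phi> k \<alpha> = \<alpha>"
    using k assms(3) unfolding stabilizer_def by blast
  ultimately have "\<phi> r (\<phi> g \<alpha>) = \<phi> g \<alpha>"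
    using r k K assms(1,2) element_image by (simp add: composition_rule subsetD)
  then show "r \<in> stabilizer G \<phi> (\<phi> g \<alpha>)"
    using r k K assms(1) unfolding stabilizer_def by (simp add: subsetD)
qed

lemma generate_subset_stabilizer_iff:
  assumes "x \<in> carrier G" and "\<omega> \<in> E"
  shows "generate G {x} \<subseteq> stabilizer G \<phi> \<omega> \<longleftrightarrow> \<phi> x \<omega> = \<omega>"
proof
  assume "generate G {x} \<subseteq> stabilizer G \<phi> \<omega>"
  then show "\<phi> x \<omega> = \<omega>"
    using generate.incl[of x "{x}" G] unfolding stabilizer_def by blast
next
  assume "\<phi> x \<omega> = \<omega>"
  then have "{x} \<subseteq> stabilizer G \<phi> \<omega>"
    using assms(1) unfolding stabilizer_def by simp
  then show "generate G {x} \<subseteq> stabilizer G \<phi> \<omega>"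
    using generate_subgroup_incl[OF _ stabilizer_subgroup[OF assms(2)]] by simp
qed

lemma generate_prime_ord_stabilizer_eq_one:
  assumes "x \<in> carrier G" and "Factorial_Ring.prime (ord x)" and "\<omega> \<in> E" and "\<phi> x \<omega> \<noteq> \<omega>"
    and "h \<in> generate G {x}" and "h \<in> stabilizer G \<phi> \<omega>"
  shows "h = \<one>"
proof (rule ccontr)
  assume "h \<noteq> \<one>"
  then have "generate G {h} = generate G {x}"
    using generate_eq_if_prime_ord[OF assms(1,2,5)] by simp
  moreover have "generate G {h} \<subseteq> stabilizer G \<phi> \<omega>"
    using generate_subset_stabilizer_iff[OF _ assms(3), of h] assms(6) unfolding stabilizer_def by auto
  ultimately show False
    using generate_subset_stabilizer_iff[OF assms(1,3)] assms(4) by simp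
qed

lemma subnormal_subset_stabilizer:
  assumes fixed: "{\<beta> \<in> E. \<phi> x \<beta> = \<beta>} = {\<alpha>}" and "x \<in> carrier G"
    and "subnormal G (generate G {x}) K"
  shows "K \<subseteq> stabilizer G \<phi> \<alpha>"
  using assms(3)
proof (induction "generate G {x}" K rule: subnormal.induct)
  case refl
  show ?case
    using generate_subset_stabilizer_iff[OF assms(2)] fixed by auto
next
  case (step L K)
  have "\<alpha> \<in> E"
    using fixed by auto
  have "\<phi> k \<alpha> = \<alpha>" if k: "k \<in> K" for k
  proof -
    have k_G: "k \<in> carrier G"
      using k subgroup.subset[OF step(4)] by blast
    have "x \<in> L"
      using subnormal_subgroups(3)[OF step(1)] generate.incl[of x "{x}" G] by blast
    then have "inv k \<otimes> x \<otimes> k \<in> L"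
      using normal.inv_op_closed1[OF step(3), of k x] k m_inv_consistent[OF step(4) k] by simp
    then have "k \<otimes> (inv k \<otimes> x \<otimes> k) \<otimes> inv k \<in> k <# L #> inv k"
      using conj_coset_eq_image by simp
    then have "x \<in> stabilizer G \<phi> (\<phi> k \<alpha>)"
      using conj_coset_stabilizer[OF k_G \<open>\<alpha> \<in> E\<close> step(2)] conjugation_is_surj[OF k_G assms(2)]
      by auto
    moreover have "\<phi> k \<alpha> \<in> E"
      using element_image[OF k_G \<open>\<alpha> \<in> E\<close>] by simp
    ultimately show ?thesis
      using fixed unfolding stabilizer_def by auto
  qed
  then show ?case
    using subgroup.subset[OF step(4)] unfolding stabilizer_def by auto
qed

lemma subnormaliser_subset_stabilizer:
  assumes "{\<beta> \<in> E. \<phi> x \<beta> = \<beta>} = {\<alpha>}" and "x \<in> carrier G"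
  shows "subnormaliser G x \<subseteq> stabilizer G \<phi> \<alpha>"
  unfolding subnormaliser_def
proof (rule generate_subgroup_incl)
  have "\<alpha> \<in> E"
    using assms(1) by auto
  then show "subgroup (stabilizer G \<phi> \<alpha>) G"
    by (rule stabilizer_subgroup)
  show "{g \<in> carrier G. subnormal G (generate G {x}) (generate G {x, g})} \<subseteq> stabilizer G \<phi> \<alpha>"
  proof
    fix g
    assume g: "g \<in> {g \<in> carrier G. subnormal G (generate G {x}) (generate G {x, g})}"
    have "g \<in> generate G {x, g}"
      by (rule generate.incl) simp
    then show "g \<in> stabilizer G \<phi> \<alpha>"
      using subnormal_subset_stabilizer[OF assms] g by blast
  qed
qed

end

lemma (in transitive_action) fixed_point_unique_if_subnormaliser_subset_stabilizer:
  assumes "finite (carrier G)" and "\<alpha> \<in> E" and x: "x \<in> stabilizer G \<phi> \<alpha>"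
    and p: "Factorial_Ring.prime (ord x)"
    and sub: "subnormaliser G x \<subseteq> stabilizer G \<phi> \<alpha>"
    and "\<beta> \<in> E" and "\<phi> x \<beta> = \<beta>"
  shows "\<beta> = \<alpha>"
proof -
  define G\<^sub>\<beta> where "G\<^sub>\<beta> = stabilizer G \<phi> \<beta>"
  have G\<^sub>\<beta>: "subgroup G\<^sub>\<beta> G"
    unfolding G\<^sub>\<beta>_def using stabilizer_subgroup[OF \<open>\<beta> \<in> E\<close>] .
  have "x \<in> G\<^sub>\<beta>"
    using x \<open>\<phi> x \<beta> = \<beta>\<close> unfolding G\<^sub>\<beta>_def stabilizer_def by simp
  then obtain P k where P: "subgroup P G" and "P \<subseteq> G\<^sub>\<beta>" and card_P: "card P = ord x ^ k"
    and P_sn: "subnormal G (generate G {x}) P"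
    and index_P: "\<not> ord x dvd card (rcosets\<^bsub>G\<lparr>carrier := G\<^sub>\<beta>\<rparr>\<^esub> P)"
    using exists_sylow_subnormal[OF assms(1) G\<^sub>\<beta> _ p] by blast
  have N_sub: "normalizer G P \<subseteq> stabilizer G \<phi> \<alpha>"
    using normalizer_subset_subnormaliser[OF P_sn] sub by blast
  then have "P \<subseteq> stabilizer G \<phi> \<alpha>"
    using subgroup.subset[OF normal_imp_subgroup[OF subgroup_in_normalizer[OF P]]] by auto
  obtain g where g: "g \<in> carrier G" and "\<phi> g \<alpha> = \<beta>"
    using unique_orbit[OF \<open>\<alpha> \<in> E\<close> \<open>\<beta> \<in> E\<close>] by blast
  then have "g <# P #> inv g \<subseteq> G\<^sub>\<beta>"
    using conj_coset_stabilizer[OF g \<open>\<alpha> \<in> E\<close> \<open>P \<subseteq> stabilizer G \<phi> \<alpha>\<close>] unfolding G\<^sub>\<beta>_def by simp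
  then obtain h where h: "h \<in> G\<^sub>\<beta>" and "h \<otimes> g \<in> normalizer G P"
    using exists_mult_in_normalizer_if_sylow_conj_subset[OF assms(1) G\<^sub>\<beta> P \<open>P \<subseteq> G\<^sub>\<beta>\<close> p card_P index_P g]
    by blast
  have "h \<in> carrier G"
    using h subgroup.subset[OF G\<^sub>\<beta>] by blast
  then have "\<phi> (h \<otimes> g) \<alpha> = \<beta>"
    using composition_rule[OF \<open>\<alpha> \<in> E\<close> _ g] \<open>\<phi> g \<alpha> = \<beta>\<close> h unfolding G\<^sub>\<beta>_def stabilizer_def by simp
  moreover have "\<phi> (h \<otimes> g) \<alpha> = \<alpha>"
    using N_sub \<open>h \<otimes> g \<in> normalizer G P\<close> unfolding stabilizer_def by blast
  ultimately show "\<beta> = \<alpha>"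
    by simp
qed

lemma (in transitive_action) subnormaliser_subset_stabilizer_iff:
  assumes "finite (carrier G)" and "\<alpha> \<in> E" and "x \<in> stabilizer G \<phi> \<alpha>"
    and "Factorial_Ring.prime (ord x)"
  shows "subnormaliser G x \<subseteq> stabilizer G \<phi> \<alpha> \<longleftrightarrow> {\<beta> \<in> E. \<phi> x \<beta> = \<beta>} = {\<alpha>}"
proof
  assume "subnormaliser G x \<subseteq> stabilizer G \<phi> \<alpha>"
  then show "{\<beta> \<in> E. \<phi> x \<beta> = \<beta>} = {\<alpha>}"
    using fixed_point_unique_if_subnormaliser_subset_stabilizer[OF assms] assms(2,3)
    unfolding stabilizer_def by blast
next
  assume "{\<beta> \<in> E. \<phi> x \<beta> = \<beta>} = {\<alpha>}"
  then show "subnormaliser G x \<subseteq> stabilizer G \<phi> \<alpha>"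
    using subnormaliser_subset_stabilizer assms(3) stabilizer_subset by blast
qed

section \<open>Permutation groups\<close>

lemma group_action_BijGroup_subgroup:
  assumes "subgroup G (BijGroup \<Omega>)"
  shows "group_action (BijGroup \<Omega>\<lparr>carrier := G\<rparr>) \<Omega> (\<lambda>g. g)"
proof -
  have "group_action (BijGroup \<Omega>) \<Omega> (\<lambda>g. g)"
    unfolding group_action_def group_hom_def group_hom_axioms_def hom_def
    using group_BijGroup by simp
  then show ?thesis
    using group_action.induced_action assms by blast
qed

lemma quasi_semiregular_iff_unique_fixed_point:
  assumes "subgroup G (BijGroup \<Omega>)" and "x \<in> G"
    and p: "Factorial_Ring.prime (group.ord (BijGroup \<Omega>\<lparr>carrier := G\<rparr>) x)"
    and "\<alpha> \<in> \<Omega>" and "x \<alpha> = \<alpha>"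
  shows "quasi_semiregular \<Omega> x \<longleftrightarrow> {\<beta> \<in> \<Omega>. x \<beta> = \<beta>} = {\<alpha>}"
proof -
  interpret A: group_action "BijGroup \<Omega>\<lparr>carrier := G\<rparr>" \<Omega> "\<lambda>g. g"
    using group_action_BijGroup_subgroup[OF assms(1)] .
  define C where "C = generate (BijGroup \<Omega>\<lparr>carrier := G\<rparr>) {x}"
  have C_eq: "generate (BijGroup \<Omega>) {x} = C"
    unfolding C_def using group.generate_consistent[OF group_BijGroup, of "{x}" G] assms(1,2) by simp
  have "C \<subseteq> G"
    using subgroup.subset[OF A.generate_is_subgroup[of "{x}"]] assms(2) unfolding C_def by simp
  have C_fix: "(\<forall>h\<in>C. h \<omega> = \<omega>) \<longleftrightarrow> x \<omega> = \<omega>" if "\<omega> \<in> \<Omega>" for \<omega>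
    using A.generate_subset_stabilizer_iff[of x \<omega>] \<open>C \<subseteq> G\<close> assms(2) that
    unfolding C_def stabilizer_def by auto
  show ?thesis
    unfolding quasi_semiregular_def Let_def C_eq
  proof
    assume "\<exists>\<omega>\<^sub>0\<in>\<Omega>. (\<forall>\<omega>\<in>\<Omega>. (\<forall>h\<in>C. h \<omega> = \<omega>) \<longleftrightarrow> \<omega> = \<omega>\<^sub>0) \<and>
      (\<forall>\<omega>\<in>\<Omega> - {\<omega>\<^sub>0}. \<forall>h\<in>C. h \<omega> = \<omega> \<longrightarrow> h = \<one>\<^bsub>BijGroup \<Omega>\<^esub>)"
    then obtain \<omega>\<^sub>0 where "\<forall>\<omega>\<in>\<Omega>. (\<forall>h\<in>C. h \<omega> = \<omega>) \<longleftrightarrow> \<omega> = \<omega>\<^sub>0"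
      by blast
    then have "\<forall>\<omega>\<in>\<Omega>. x \<omega> = \<omega> \<longleftrightarrow> \<omega> = \<omega>\<^sub>0"
      using C_fix by simp
    then show "{\<beta> \<in> \<Omega>. x \<beta> = \<beta>} = {\<alpha>}"
      using assms(4,5) by auto
  next
    assume fixed: "{\<beta> \<in> \<Omega>. x \<beta> = \<beta>} = {\<alpha>}"
    then have "\<forall>\<omega>\<in>\<Omega>. (\<forall>h\<in>C. h \<omega> = \<omega>) \<longleftrightarrow> \<omega> = \<alpha>"
      using C_fix by auto
    moreover have "\<forall>\<omega>\<in>\<Omega> - {\<alpha>}. \<forall>h\<in>C. h \<omega> = \<omega> \<longrightarrow> h = \<one>\<^bsub>BijGroup \<Omega>\<^esub>"
    proof (intro ballI impI)
      fix \<omega> h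
      assume "\<omega> \<in> \<Omega> - {\<alpha>}" and "h \<in> C" and "h \<omega> = \<omega>"
      moreover have "x \<omega> \<noteq> \<omega>"
        using fixed \<open>\<omega> \<in> \<Omega> - {\<alpha>}\<close> by blast
      ultimately show "h = \<one>\<^bsub>BijGroup \<Omega>\<^esub>"
        using A.generate_prime_ord_stabilizer_eq_one[OF _ p, of \<omega> h] assms(2) \<open>C \<subseteq> G\<close>
        unfolding C_def stabilizer_def by auto
    qed
    ultimately show "\<exists>\<omega>\<^sub>0\<in>\<Omega>. (\<forall>\<omega>\<in>\<Omega>. (\<forall>h\<in>C. h \<omega> = \<omega>) \<longleftrightarrow> \<omega> = \<omega>\<^sub>0) \<and>
      (\<forall>\<omega>\<in>\<Omega> - {\<omega>\<^sub>0}. \<forall>h\<in>C. h \<omega> = \<omega> \<longrightarrow> h = \<one>\<^bsub>BijGroup \<Omega>\<^esub>)"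
      using assms(4) by blast
  qed
qed

theorem theorem3p3:
  fixes \<Omega> :: "'a set" and G :: "('a \<Rightarrow> 'a) set" and \<alpha> :: 'a and x :: "'a \<Rightarrow> 'a"
  assumes "subgroup G (BijGroup \<Omega>)"
    and "finite G"
    and "\<forall>\<beta>\<in>\<Omega>. \<forall>\<gamma>\<in>\<Omega>. \<exists>g\<in>G. g \<beta> = \<gamma>"
    and "\<alpha> \<in> \<Omega>"
    and "x \<in> G" and "x \<alpha> = \<alpha>"
    and "Factorial_Ring.prime (group.ord ((BijGroup \<Omega>)\<lparr>carrier := G\<rparr>) x)"
  shows "quasi_semiregular \<Omega> x \<longleftrightarrow>
           subnormaliser ((BijGroup \<Omega>)\<lparr>carrier := G\<rparr>) x \<subseteq> {g \<in> G. g \<alpha> = \<alpha>}"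
proof -
  interpret transitive_action "BijGroup \<Omega>\<lparr>carrier := G\<rparr>" \<Omega> "\<lambda>g. g"
    using group_action_BijGroup_subgroup[OF assms(1)] assms(3)
    unfolding transitive_action_def transitive_action_axioms_def by simp
  have stabilizer_\<alpha>: "stabilizer (BijGroup \<Omega>\<lparr>carrier := G\<rparr>) (\<lambda>g. g) \<alpha> = {g \<in> G. g \<alpha> = \<alpha>}"
    unfolding stabilizer_def by simp
  have "quasi_semiregular \<Omega> x \<longleftrightarrow> {\<beta> \<in> \<Omega>. x \<beta> = \<beta>} = {\<alpha>}"
    using quasi_semiregular_iff_unique_fixed_point[OF assms(1,5,7,4,6)] .
  also have "\<dots> \<longleftrightarrow> subnormaliser (BijGroup \<Omega>\<lparr>carrier := G\<rparr>) x \<subseteq> {g \<in> G. g \<alpha> = \<alpha>}"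
    using subnormaliser_subset_stabilizer_iff[of \<alpha> x] assms(2,4-7) stabilizer_\<alpha> by simp
  finally show ?thesis .
qed

end
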